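(* Let $X$ be a connected cubic graph and let $G\leq\mathrm{Aut}\,X$ be an $s$-regular group of automorphisms with $s\in\{1,4\}$. Then every connected $G$-split $2$-cover of $X$ is the canonical double cover of $X$.
   Context: Graphs are finite and simple; maps are composed on the right. An $s$-arc is a sequence $(v_0,\dots,v_s)$ of vertices with $v_{i-1}\sim v_i$ and $v_{i-1}\neq v_{i+1}$; $G$ is $s$-regular if it acts regularly on the set of $s$-arcs. A regular covering projection $\wp\colon\tilde X\to X$ is a surjective graph homomorphism, locally bijective on neighbourhoods, whose group $\mathrm{CT}(\wp)$ of covering transformations (automorphisms $c$ of $\tilde X$ with $c\wp=\wp$) acts regularly on fibres; a $2$-cover has $\mathrm{CT}(\wp)\cong\mathbb{Z}_2$. A lift of $g\in\mathrm{Aut}\,X$ is $\tilde g\in\mathrm{Aut}\,\tilde X$ with $\wp g=\tilde g\wp$; $\wp$ is a $G$-split $2$-cover if every element of $G$ lifts and $\mathrm{CT}(\wp)$ has a complement in the lifted group $\tilde G$ (the group of all lifts). The canonical double cover of $X$ is the projection $(u,i)\mapsto u$ from the graph on $V(X)\times\mathbb{Z}_2$ with $(u,i)\sim(v,i+1)$ whenever $u\sim v$ (up to isomorphism of covering projections). *)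

theory Defs
  imports "HOL-Algebra.Bij" "HOL-Algebra.Coset"
begin

definition simple_graph :: "'a set \<Rightarrow> ('a \<Rightarrow> 'a \<Rightarrow> bool) \<Rightarrow> bool" where
  "simple_graph V E \<longleftrightarrow> finite V \<and> (\<forall>u v. E u v \<longrightarrow> u \<in> V \<and> v \<in> V)
     \<and> (\<forall>u v. E u v \<longrightarrow> E v u) \<and> (\<forall>u. \<not> E u u)"

definition cubic :: "'a set \<Rightarrow> ('a \<Rightarrow> 'a \<Rightarrow> bool) \<Rightarrow> bool" where
  "cubic V E \<longleftrightarrow> (\<forall>u\<in>V. card {v. E u v} = 3)"

definition graph_connected :: "'a set \<Rightarrow> ('a \<Rightarrow> 'a \<Rightarrow> bool) \<Rightarrow> bool" where
  "graph_connected V E \<longleftrightarrow> V \<noteq> {} \<and> (\<forall>u\<in>V. \<forall>v\<in>V. E\<^sup>*\<^sup>* u v)"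

definition graph_aut :: "'a set \<Rightarrow> ('a \<Rightarrow> 'a \<Rightarrow> bool) \<Rightarrow> ('a \<Rightarrow> 'a) set" where
  "graph_aut V E = {g \<in> Bij V. \<forall>u\<in>V. \<forall>v\<in>V. E u v \<longleftrightarrow> E (g u) (g v)}"

definition s_arcs :: "'a set \<Rightarrow> ('a \<Rightarrow> 'a \<Rightarrow> bool) \<Rightarrow> nat \<Rightarrow> 'a list set" where
  "s_arcs V E s = {xs. length xs = Suc s \<and> set xs \<subseteq> V
      \<and> (\<forall>i<s. E (xs ! i) (xs ! Suc i))
      \<and> (\<forall>i. Suc i < s \<longrightarrow> xs ! i \<noteq> xs ! Suc (Suc i))}"

definition s_regular :: "'a set \<Rightarrow> ('a \<Rightarrow> 'a \<Rightarrow> bool) \<Rightarrow> ('a \<Rightarrow> 'a) set \<Rightarrow> nat \<Rightarrow> bool" where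
  "s_regular V E G s \<longleftrightarrow>
     (\<forall>\<alpha>\<in>s_arcs V E s. \<forall>\<beta>\<in>s_arcs V E s. \<exists>!g. g \<in> G \<and> map g \<alpha> = \<beta>)"

definition covering_projection ::
  "'b set \<Rightarrow> ('b \<Rightarrow> 'b \<Rightarrow> bool) \<Rightarrow> 'a set \<Rightarrow> ('a \<Rightarrow> 'a \<Rightarrow> bool) \<Rightarrow> ('b \<Rightarrow> 'a) \<Rightarrow> bool" where
  "covering_projection Vt Et V E p \<longleftrightarrow> p ` Vt = V
     \<and> (\<forall>x y. Et x y \<longrightarrow> E (p x) (p y))
     \<and> (\<forall>x\<in>Vt. bij_betw p {y. Et x y} {v. E (p x) v})"

definition covering_transformations ::
  "'b set \<Rightarrow> ('b \<Rightarrow> 'b \<Rightarrow> bool) \<Rightarrow> ('b \<Rightarrow> 'a) \<Rightarrow> ('b \<Rightarrow> 'b) set" where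
  "covering_transformations Vt Et p = {c \<in> graph_aut Vt Et. \<forall>x\<in>Vt. p (c x) = p x}"

definition regular_covering ::
  "'b set \<Rightarrow> ('b \<Rightarrow> 'b \<Rightarrow> bool) \<Rightarrow> 'a set \<Rightarrow> ('a \<Rightarrow> 'a \<Rightarrow> bool) \<Rightarrow> ('b \<Rightarrow> 'a) \<Rightarrow> bool" where
  "regular_covering Vt Et V E p \<longleftrightarrow> covering_projection Vt Et V E p
     \<and> (\<forall>x\<in>Vt. \<forall>y\<in>Vt. p x = p y \<longrightarrow>
          (\<exists>!c. c \<in> covering_transformations Vt Et p \<and> c x = y))"

definition two_cover ::
  "'b set \<Rightarrow> ('b \<Rightarrow> 'b \<Rightarrow> bool) \<Rightarrow> 'a set \<Rightarrow> ('a \<Rightarrow> 'a \<Rightarrow> bool) \<Rightarrow> ('b \<Rightarrow> 'a) \<Rightarrow> bool" where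
  "two_cover Vt Et V E p \<longleftrightarrow> regular_covering Vt Et V E p
     \<and> card (covering_transformations Vt Et p) = 2"

definition is_lift ::
  "'b set \<Rightarrow> ('b \<Rightarrow> 'b \<Rightarrow> bool) \<Rightarrow> ('b \<Rightarrow> 'a) \<Rightarrow> ('a \<Rightarrow> 'a) \<Rightarrow> ('b \<Rightarrow> 'b) \<Rightarrow> bool" where
  "is_lift Vt Et p g gt \<longleftrightarrow> gt \<in> graph_aut Vt Et \<and> (\<forall>x\<in>Vt. p (gt x) = g (p x))"

definition lifted_group ::
  "'b set \<Rightarrow> ('b \<Rightarrow> 'b \<Rightarrow> bool) \<Rightarrow> ('b \<Rightarrow> 'a) \<Rightarrow> ('a \<Rightarrow> 'a) set \<Rightarrow> ('b \<Rightarrow> 'b) set" where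
  "lifted_group Vt Et p G = {gt. \<exists>g\<in>G. is_lift Vt Et p g gt}"

definition G_split_two_cover ::
  "'a set \<Rightarrow> ('a \<Rightarrow> 'a \<Rightarrow> bool) \<Rightarrow> ('a \<Rightarrow> 'a) set \<Rightarrow> 'b set \<Rightarrow> ('b \<Rightarrow> 'b \<Rightarrow> bool) \<Rightarrow> ('b \<Rightarrow> 'a) \<Rightarrow> bool" where
  "G_split_two_cover V E G Vt Et p \<longleftrightarrow> two_cover Vt Et V E p
     \<and> (\<forall>g\<in>G. \<exists>gt. is_lift Vt Et p g gt)
     \<and> (\<exists>H. subgroup H (BijGroup Vt) \<and> H \<subseteq> lifted_group Vt Et p G
          \<and> H \<inter> covering_transformations Vt Et p = {\<one>\<^bsub>BijGroup Vt\<^esub>}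
          \<and> H <#>\<^bsub>BijGroup Vt\<^esub> covering_transformations Vt Et p = lifted_group Vt Et p G)"

text \<open>Canonical double cover: graph on V x Z_2 (Z_2 rendered as bool),
  (u,i) ~ (v,i+1) iff u ~ v; projection is fst.\<close>
definition cdc_edge :: "('a \<Rightarrow> 'a \<Rightarrow> bool) \<Rightarrow> 'a \<times> bool \<Rightarrow> 'a \<times> bool \<Rightarrow> bool" where
  "cdc_edge E x y \<longleftrightarrow> E (fst x) (fst y) \<and> snd y = (\<not> snd x)"

definition is_canonical_double_cover ::
  "'a set \<Rightarrow> ('a \<Rightarrow> 'a \<Rightarrow> bool) \<Rightarrow> 'b set \<Rightarrow> ('b \<Rightarrow> 'b \<Rightarrow> bool) \<Rightarrow> ('b \<Rightarrow> 'a) \<Rightarrow> bool" where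
  "is_canonical_double_cover V E Vt Et p \<longleftrightarrow>
     (\<exists>\<phi>. bij_betw \<phi> Vt (V \<times> (UNIV :: bool set))
        \<and> (\<forall>x\<in>Vt. \<forall>y\<in>Vt. Et x y \<longleftrightarrow> cdc_edge E (\<phi> x) (\<phi> y))
        \<and> (\<forall>x\<in>Vt. fst (\<phi> x) = p x))"

end

(* Every g in G has exactly one lift in the complement H of the covering group {1, c}, and
   g -> lift g is a homomorphism commuting with c.  Hence, for a vertex x of the cover,
   "lift g moves x" is a homomorphism from the stabiliser of p x to Z_2, and the crux is that it
   is trivial.  For s = 1 the stabiliser is cyclic of order 3.  For s = 4 one descends
   G_v > G_vw > G_v^[1] > G_vw^[1]: the last group has order 2, its generators for the three
   edges at v are conjugate, so they have equal parity, and the product of two of them is the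
   third, so that parity is 0.
   Consequently the H-orbit O of a vertex x0 meets each fibre {y, c y} exactly once.  An edge
   inside O would, by arc-transitivity and connectivity of the cover, put c x0 into O; so O and
   c O are the colour classes of a bipartition identifying the cover with the canonical double
   cover. *)

theory Submission
  imports Defs
begin

lemma BijGroup_mult_apply:
  "g \<in> Bij S \<Longrightarrow> f \<in> Bij S \<Longrightarrow> x \<in> S \<Longrightarrow> (g \<otimes>\<^bsub>BijGroup S\<^esub> f) x = g (f x)"
  by (simp add: BijGroup_def compose_def)

lemma BijGroup_one_apply: "x \<in> S \<Longrightarrow> \<one>\<^bsub>BijGroup S\<^esub> x = x"
  by (simp add: BijGroup_def)

lemma BijGroup_carrier: "carrier (BijGroup S) = Bij S"
  by (simp add: BijGroup_def)

lemma Bij_mem: "g \<in> Bij S \<Longrightarrow> x \<in> S \<Longrightarrow> g x \<in> S"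
  by (auto simp: Bij_def bij_betw_def)

lemma Bij_inj: "g \<in> Bij S \<Longrightarrow> x \<in> S \<Longrightarrow> y \<in> S \<Longrightarrow> g x = g y \<Longrightarrow> x = y"
  by (auto simp: Bij_def bij_betw_def inj_on_def)

lemma Bij_surj: "g \<in> Bij S \<Longrightarrow> y \<in> S \<Longrightarrow> \<exists>x\<in>S. g x = y"
  by (metis Bij_def Int_iff bij_betw_def imageE mem_Collect_eq)

lemma Bij_eqI: "f \<in> Bij S \<Longrightarrow> g \<in> Bij S \<Longrightarrow> (\<And>x. x \<in> S \<Longrightarrow> f x = g x) \<Longrightarrow> f = g"
  by (auto simp: Bij_def intro: extensionalityI)

lemma BijGroup_apply_inv:
  assumes "g \<in> Bij S" "x \<in> S"
  shows "g ((inv\<^bsub>BijGroup S\<^esub> g) x) = x"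
  using assms by (auto simp: inv_BijGroup Bij_def bij_betw_def intro: f_inv_into_f)

lemma BijGroup_inv_apply:
  assumes "g \<in> Bij S" "x \<in> S"
  shows "(inv\<^bsub>BijGroup S\<^esub> g) (g x) = x"
  using assms by (auto simp: inv_BijGroup Bij_mem Bij_def bij_betw_def)

lemma card_3_obtain_others:
  assumes "card S = 3" "w \<in> S"
  shows "\<exists>a a'. S = {w, a, a'} \<and> a \<noteq> a' \<and> a \<noteq> w \<and> a' \<noteq> w"
proof -
  have "card (S - {w}) = 2" using assms by simp
  then obtain a a' where "S - {w} = {a, a'}" "a \<noteq> a'" by (auto simp: card_2_iff)
  moreover have "S = insert w (S - {w})" using assms(2) by blast
  ultimately show ?thesis by auto
qed

section \<open>Cubic graphs and their s-arcs\<close>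

locale cubic_graph =
  fixes V :: "'a set" and E :: "'a \<Rightarrow> 'a \<Rightarrow> bool"
  assumes simple: "simple_graph V E" and cubic: "cubic V E"
begin

lemma adj_in_V: "E u v \<Longrightarrow> u \<in> V \<and> v \<in> V"
  using simple by (simp add: simple_graph_def)

lemma adj_sym: "E u v \<Longrightarrow> E v u"
  using simple by (simp add: simple_graph_def)

lemma neighbourhood_split:
  assumes "E v w"
  obtains a a' where "\<And>u. E v u \<longleftrightarrow> u = w \<or> u = a \<or> u = a'" "a \<noteq> a'" "a \<noteq> w" "a' \<noteq> w"
proof -
  have "card {u. E v u} = 3" using cubic adj_in_V[OF assms] by (simp add: cubic_def)
  with assms obtain a a' where N: "{u. E v u} = {w, a, a'}" "a \<noteq> a'" "a \<noteq> w" "a' \<noteq> w"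
    using card_3_obtain_others[of "{u. E v u}" w] by auto
  show thesis
  proof (rule that)
    show "E v u \<longleftrightarrow> u = w \<or> u = a \<or> u = a'" for u using N(1) by blast
  qed (use N in auto)
qed

lemma neighbour_exists:
  assumes "v \<in> V" shows "\<exists>w. E v w"
proof -
  have "card {w. E v w} = 3" using cubic assms by (simp add: cubic_def)
  then have "{w. E v w} \<noteq> {}" by (metis card.empty zero_neq_numeral)
  then show ?thesis by blast
qed

lemma other_neighbour: "E v w \<Longrightarrow> \<exists>a. E v a \<and> a \<noteq> w"
  by (metis neighbourhood_split)

lemma aut_adj: "g \<in> graph_aut V E \<Longrightarrow> E u w \<Longrightarrow> E (g u) (g w)"
  unfolding graph_aut_def using adj_in_V[of u w] by blast

lemma aut_adj_iff:
  "g \<in> graph_aut V E \<Longrightarrow> u \<in> V \<Longrightarrow> w \<in> V \<Longrightarrow> E (g u) (g w) \<longleftrightarrow> E u w"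
  unfolding graph_aut_def by blast

lemma aut_Bij: "g \<in> graph_aut V E \<Longrightarrow> g \<in> Bij V"
  unfolding graph_aut_def by blast

lemma aut_inj: "g \<in> graph_aut V E \<Longrightarrow> u \<in> V \<Longrightarrow> w \<in> V \<Longrightarrow> g u = g w \<Longrightarrow> u = w"
  by (rule Bij_inj[OF aut_Bij])

lemma aut_fixing_arc_cases:
  assumes g: "g \<in> graph_aut V E" "g v = v" "g w = w"
    and N: "\<And>u. E v u \<longleftrightarrow> u = w \<or> u = a \<or> u = a'" and "a \<noteq> a'" "a \<noteq> w" "a' \<noteq> w"
  shows "(g a = a \<and> g a' = a') \<or> (g a = a' \<and> g a' = a)"
proof -
  have adj: "E v w" "E v a" "E v a'" using N by auto
  then have V: "w \<in> V" "a \<in> V" "a' \<in> V" using adj_in_V by auto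
  have "g a = w \<or> g a = a \<or> g a = a'" "g a' = w \<or> g a' = a \<or> g a' = a'"
    using aut_adj[OF g(1) adj(2)] aut_adj[OF g(1) adj(3)] g(2) N by simp_all
  moreover have "g a \<noteq> w" using aut_inj[OF g(1) V(2) V(1)] g(3) assms(6) by auto
  moreover have "g a' \<noteq> w" using aut_inj[OF g(1) V(3) V(1)] g(3) assms(7) by auto
  moreover have "g a \<noteq> g a'" using aut_inj[OF g(1) V(2) V(3)] assms(5) by auto
  ultimately show ?thesis by argo
qed

lemma aut_fixing_two_neighbours:
  assumes g: "g \<in> graph_aut V E" "g v = v" "g w = w" "g a = a"
    and "E v w" "E v a" "w \<noteq> a" "E v y"
  shows "g y = y"
proof -
  obtain b b' where N: "\<And>u. E v u \<longleftrightarrow> u = w \<or> u = b \<or> u = b'"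
    and "b \<noteq> b'" "b \<noteq> w" "b' \<noteq> w"
    using neighbourhood_split[OF \<open>E v w\<close>] by blast
  then have "(g b = b \<and> g b' = b') \<or> (g b = b' \<and> g b' = b)"
    using aut_fixing_arc_cases[OF g(1-3)] by blast
  moreover have "a = b \<or> a = b'" using N[of a] assms(6,7) by auto
  ultimately show ?thesis using N assms(4,8) g(3) by metis
qed

lemma s_arcs_1_iff: "[v, u] \<in> s_arcs V E 1 \<longleftrightarrow> E v u"
  using adj_in_V by (auto simp: s_arcs_def)

lemma s_arcs_2I: "E w v \<Longrightarrow> E v a \<Longrightarrow> w \<noteq> a \<Longrightarrow> [w, v, a] \<in> s_arcs V E 2"
  using adj_in_V by (auto simp: s_arcs_def numeral_eq_Suc less_Suc_eq nth_Cons')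

lemma s_arcs_4I:
  "E a b \<Longrightarrow> E b c \<Longrightarrow> E c d \<Longrightarrow> E d e \<Longrightarrow> a \<noteq> c \<Longrightarrow> b \<noteq> d \<Longrightarrow> c \<noteq> e
    \<Longrightarrow> [a, b, c, d, e] \<in> s_arcs V E 4"
  using adj_in_V by (auto simp: s_arcs_def numeral_eq_Suc less_Suc_eq nth_Cons')

lemma s_arcs_snoc:
  assumes \<alpha>: "\<alpha> \<in> s_arcs V E (Suc m)"
  shows "\<exists>w. \<alpha> @ [w] \<in> s_arcs V E (Suc (Suc m))"
proof -
  have len: "length \<alpha> = Suc (Suc m)" using \<alpha> by (simp add: s_arcs_def)
  have "E (\<alpha> ! m) (\<alpha> ! Suc m)" using \<alpha> by (simp add: s_arcs_def)
  then obtain w where w: "E (\<alpha> ! Suc m) w" "w \<noteq> \<alpha> ! m"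
    using other_neighbour adj_sym by blast
  let ?\<beta> = "\<alpha> @ [w]"
  have nth: "?\<beta> ! i = \<alpha> ! i" if "i \<le> Suc m" for i
    using that len by (simp add: nth_append)
  have last: "?\<beta> ! Suc (Suc m) = w" using len nth_append_length[of \<alpha> w] by simp
  have "E (?\<beta> ! i) (?\<beta> ! Suc i)" if "i < Suc (Suc m)" for i
  proof (cases "i < Suc m")
    case True
    then show ?thesis using \<alpha> nth[of i] nth[of "Suc i"] by (simp add: s_arcs_def)
  next
    case False
    then have "i = Suc m" using that by simp
    then show ?thesis using w(1) nth[of "Suc m"] last by simp
  qed
  moreover have "?\<beta> ! i \<noteq> ?\<beta> ! Suc (Suc i)" if "Suc i < Suc (Suc m)" for i
  proof (cases "Suc i < Suc m")
    case True
    then show ?thesis using \<alpha> nth[of i] nth[of "Suc (Suc i)"] by (simp add: s_arcs_def)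
  next
    case False
    then have "i = m" using that by simp
    then show ?thesis using w(2) nth[of i] last by simp
  qed
  moreover have "w \<in> V" using w(1) adj_in_V by blast
  ultimately show ?thesis using \<alpha> len by (intro exI[of _ w]) (auto simp: s_arcs_def)
qed

lemma s_arc_extend:
  assumes "\<alpha> \<in> s_arcs V E k" "1 \<le> k" "k \<le> n"
  shows "\<exists>\<beta>\<in>s_arcs V E n. take (Suc k) \<beta> = \<alpha>"
  using \<open>k \<le> n\<close>
proof (induction n rule: dec_induct)
  case base
  then show ?case using assms(1) by (auto simp: s_arcs_def)
next
  case (step n)
  then obtain \<beta> where \<beta>: "\<beta> \<in> s_arcs V E n" "take (Suc k) \<beta> = \<alpha>" by blast
  then obtain w where "\<beta> @ [w] \<in> s_arcs V E (Suc n)"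
    using s_arcs_snoc[of \<beta> "n - 1"] assms(2) step.hyps(1) by fastforce
  moreover have "take (Suc k) (\<beta> @ [w]) = \<alpha>"
    using \<beta> step.hyps(1) by (simp add: s_arcs_def)
  ultimately show ?case by blast
qed

end

section \<open>s-regular groups of cubic graphs\<close>

locale cubic_s_regular = cubic_graph +
  fixes G :: "('a \<Rightarrow> 'a) set" and s :: nat
  assumes G_subgroup: "subgroup G (BijGroup V)" and G_aut: "G \<subseteq> graph_aut V E"
    and s_pos: "1 \<le> s" and regular: "s_regular V E G s"
begin

abbreviation mult_G (infixl "\<cdot>" 70) where "g \<cdot> f \<equiv> g \<otimes>\<^bsub>BijGroup V\<^esub> f"
abbreviation one_G where "one_G \<equiv> \<one>\<^bsub>BijGroup V\<^esub>"
abbreviation inv_G where "inv_G g \<equiv> inv\<^bsub>BijGroup V\<^esub> g"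

lemma G_Bij: "g \<in> G \<Longrightarrow> g \<in> Bij V"
  using subgroup.subset[OF G_subgroup] by (auto simp: BijGroup_carrier)

lemma G_mem: "g \<in> G \<Longrightarrow> x \<in> V \<Longrightarrow> g x \<in> V"
  by (rule Bij_mem[OF G_Bij])

lemma G_inj: "g \<in> G \<Longrightarrow> x \<in> V \<Longrightarrow> y \<in> V \<Longrightarrow> g x = g y \<Longrightarrow> x = y"
  by (rule Bij_inj[OF G_Bij])

lemma G_graph_aut: "g \<in> G \<Longrightarrow> g \<in> graph_aut V E"
  using G_aut by blast

lemma G_adj: "g \<in> G \<Longrightarrow> E u w \<Longrightarrow> E (g u) (g w)"
  using G_aut aut_adj by blast

lemma G_adj_iff: "g \<in> G \<Longrightarrow> u \<in> V \<Longrightarrow> w \<in> V \<Longrightarrow> E (g u) (g w) \<longleftrightarrow> E u w"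
  using G_aut aut_adj_iff by blast

lemma G_eqI: "g \<in> G \<Longrightarrow> f \<in> G \<Longrightarrow> (\<And>x. x \<in> V \<Longrightarrow> g x = f x) \<Longrightarrow> g = f"
  by (rule Bij_eqI[OF G_Bij G_Bij])

lemma G_one: "one_G \<in> G"
  by (rule subgroup.one_closed[OF G_subgroup])

lemma G_mult: "g \<in> G \<Longrightarrow> f \<in> G \<Longrightarrow> g \<cdot> f \<in> G"
  by (rule subgroup.m_closed[OF G_subgroup])

lemma G_inv: "g \<in> G \<Longrightarrow> inv_G g \<in> G"
  by (rule subgroup.m_inv_closed[OF G_subgroup])

lemma G_mult_apply: "g \<in> G \<Longrightarrow> f \<in> G \<Longrightarrow> x \<in> V \<Longrightarrow> (g \<cdot> f) x = g (f x)"
  by (rule BijGroup_mult_apply[OF G_Bij G_Bij])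

lemma G_apply_inv: "g \<in> G \<Longrightarrow> x \<in> V \<Longrightarrow> g (inv_G g x) = x"
  by (rule BijGroup_apply_inv[OF G_Bij])

lemma G_inv_apply: "g \<in> G \<Longrightarrow> x \<in> V \<Longrightarrow> inv_G g (g x) = x"
  by (rule BijGroup_inv_apply[OF G_Bij])

lemma G_l_inv: "g \<in> G \<Longrightarrow> inv_G g \<cdot> g = one_G"
  using group.l_inv[OF group_BijGroup] G_Bij BijGroup_carrier by metis

lemma G_r_inv: "g \<in> G \<Longrightarrow> g \<cdot> inv_G g = one_G"
  using group.r_inv[OF group_BijGroup] G_Bij BijGroup_carrier by metis

lemma s_regular_unique:
  "\<alpha> \<in> s_arcs V E s \<Longrightarrow> \<beta> \<in> s_arcs V E s \<Longrightarrow> g \<in> G \<Longrightarrow> g' \<in> G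
    \<Longrightarrow> map g \<alpha> = \<beta> \<Longrightarrow> map g' \<alpha> = \<beta> \<Longrightarrow> g = g'"
  using regular unfolding s_regular_def by blast

lemma s_regular_exists: "\<alpha> \<in> s_arcs V E s \<Longrightarrow> \<beta> \<in> s_arcs V E s \<Longrightarrow> \<exists>g\<in>G. map g \<alpha> = \<beta>"
  using regular unfolding s_regular_def by blast

lemma s_arc_stabiliser_trivial:
  assumes "\<alpha> \<in> s_arcs V E s" "g \<in> G" "map g \<alpha> = \<alpha>"
  shows "g = one_G"
proof -
  have "set \<alpha> \<subseteq> V" using assms(1) by (simp add: s_arcs_def)
  then have "map one_G \<alpha> = \<alpha>" by (intro map_idI) (auto simp: BijGroup_one_apply)
  then show ?thesis using s_regular_unique[OF assms(1,1,2) G_one assms(3)] by simp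
qed

lemma s_arc_transitive:
  assumes "\<alpha> \<in> s_arcs V E k" "\<beta> \<in> s_arcs V E k" "1 \<le> k" "k \<le> s"
  shows "\<exists>h\<in>G. map h \<alpha> = \<beta>"
proof -
  obtain \<alpha>' where \<alpha>': "\<alpha>' \<in> s_arcs V E s" "take (Suc k) \<alpha>' = \<alpha>"
    using s_arc_extend assms(1,3,4) by blast
  obtain \<beta>' where \<beta>': "\<beta>' \<in> s_arcs V E s" "take (Suc k) \<beta>' = \<beta>"
    using s_arc_extend assms(2,3,4) by blast
  obtain h where "h \<in> G" "map h \<alpha>' = \<beta>'" using s_regular_exists[OF \<alpha>'(1) \<beta>'(1)] by blast
  then show ?thesis using \<alpha>'(2) \<beta>'(2) by (metis take_map)
qed

lemma arc_transitive:
  assumes "E v u" "E v' u'"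
  shows "\<exists>h\<in>G. h v = v' \<and> h u = u'"
proof -
  have "[v, u] \<in> s_arcs V E 1" "[v', u'] \<in> s_arcs V E 1" using assms s_arcs_1_iff by blast+
  then show ?thesis using s_arc_transitive[of "[v, u]" 1 "[v', u']"] s_pos by auto
qed

lemma vertex_transitive:
  assumes "v \<in> V" "v' \<in> V"
  shows "\<exists>h\<in>G. h v = v'"
  using arc_transitive neighbour_exists assms by metis

lemma stabiliser_three_cycle:
  assumes "2 \<le> s" and N: "\<And>u. E v u \<longleftrightarrow> u = w \<or> u = a \<or> u = a'" and "a \<noteq> a'" "a \<noteq> w" "a' \<noteq> w"
  shows "\<exists>t\<in>G. t v = v \<and> t w = a \<and> t a = a' \<and> t a' = w"
proof -
  have adj: "E v w" "E v a" "E v a'" using N by auto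
  have "[w, v, a] \<in> s_arcs V E 2" "[a, v, a'] \<in> s_arcs V E 2"
    using s_arcs_2I adj adj_sym assms(4,3) by (metis, metis)
  then obtain t where t: "t \<in> G" "t w = a" "t v = v" "t a = a'"
    using s_arc_transitive[of "[w, v, a]" 2 "[a, v, a']"] assms(1) by auto
  have V: "w \<in> V" "a \<in> V" "a' \<in> V" using adj adj_in_V by auto
  have "t a' = w \<or> t a' = a \<or> t a' = a'" using G_adj[OF t(1) adj(3)] t(3) N by simp
  moreover have "t a' \<noteq> a" using G_inj[OF t(1) V(3) V(1)] t(2) assms(5) by auto
  moreover have "t a' \<noteq> a'" using G_inj[OF t(1) V(3) V(2)] t(4) assms(3) by auto
  ultimately show ?thesis using t by blast
qed

lemma one_regular_arc_stabiliser_trivial: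
  assumes "s = 1" "g \<in> G" "g v = v" "E v y" "g y = y"
  shows "g = one_G"
proof -
  have "[v, y] \<in> s_arcs V E s" using assms(1,4) s_arcs_1_iff by simp
  then show ?thesis using s_arc_stabiliser_trivial assms(2,3,5) by simp
qed

lemma one_regular_stabiliser_cube:
  assumes "s = 1" "v \<in> V" and g: "g \<in> G" "g v = v"
  shows "g \<cdot> (g \<cdot> g) = one_G"
proof -
  obtain w where w: "E v w" using neighbour_exists assms(2) by blast
  obtain a a' where N: "\<And>u. E v u \<longleftrightarrow> u = w \<or> u = a \<or> u = a'" and d: "a \<noteq> a'" "a \<noteq> w" "a' \<noteq> w"
    using neighbourhood_split[OF w] by blast
  have adj: "E v a" "E v a'" using N by auto
  have V: "w \<in> V" "a \<in> V" "a' \<in> V" using adj w adj_in_V by auto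
  have cube_apply: "(g \<cdot> (g \<cdot> g)) x = g (g (g x))" if "x \<in> V" for x
    using G_mult_apply[OF g(1) G_mult[OF g(1) g(1)] that] G_mult_apply[OF g(1) g(1) that] by simp
  show ?thesis
  proof (cases "g w = w \<or> g a = a \<or> g a' = a'")
    case True
    then have "g = one_G"
      using one_regular_arc_stabiliser_trivial[OF assms(1) g] w adj by blast
    have "one_G \<in> carrier (BijGroup V)"
      by (rule monoid.one_closed[OF group.is_monoid[OF group_BijGroup]])
    then have "one_G \<cdot> one_G = one_G"
      by (rule monoid.l_one[OF group.is_monoid[OF group_BijGroup]])
    then show ?thesis using \<open>g = one_G\<close> by simp
  next
    case False
    have "g w = w \<or> g w = a \<or> g w = a'" "g a = w \<or> g a = a \<or> g a = a'"
      "g a' = w \<or> g a' = a \<or> g a' = a'"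
      using G_adj[OF g(1) w] G_adj[OF g(1) adj(1)] G_adj[OF g(1) adj(2)] g(2) N by simp_all
    moreover have "g w \<noteq> g a" "g w \<noteq> g a'" "g a \<noteq> g a'"
      using G_inj[OF g(1)] V d by metis+
    ultimately have "g (g (g w)) = w" using False by auto
    then show ?thesis
      using one_regular_arc_stabiliser_trivial[OF assms(1) G_mult[OF g(1) G_mult[OF g(1) g(1)]] _ w]
        cube_apply V(1) assms(2) g(2) by simp
  qed
qed

subsection \<open>Edge fixers in 4-regular groups\<close>

text \<open>An edge fixer of vu is a non-identity element of the kernel G_uv^[1] of the action of
  the arc stabiliser on the neighbourhoods of u and v.\<close>
definition edge_fixer :: "'a \<Rightarrow> 'a \<Rightarrow> ('a \<Rightarrow> 'a) \<Rightarrow> bool" where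
  "edge_fixer v u k \<longleftrightarrow>
     k \<in> G \<and> k \<noteq> one_G \<and> (\<forall>y. E v y \<longrightarrow> k y = y) \<and> (\<forall>y. E u y \<longrightarrow> k y = y)"

lemma edge_fixer_sym: "edge_fixer v u k \<Longrightarrow> edge_fixer u v k"
  by (auto simp: edge_fixer_def)

lemma edge_fixer_moves:
  assumes "s = 4" "E v u" and k: "edge_fixer v u k" and a: "E v a" "a \<noteq> u" and z: "E a z" "z \<noteq> v"
  shows "k z \<noteq> z"
proof
  assume kz: "k z = z"
  obtain y where y: "E u y" "y \<noteq> v" using other_neighbour[OF adj_sym[OF assms(2)]] by blast
  have arc: "[y, u, v, a, z] \<in> s_arcs V E s"
    using s_arcs_4I[OF adj_sym[OF y(1)] adj_sym[OF assms(2)] a(1) z(1)] y a z assms(1) by auto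
  have "map k [y, u, v, a, z] = [y, u, v, a, z]"
    using k kz y assms(2) adj_sym a by (simp add: edge_fixer_def)
  then have "k = one_G" using s_arc_stabiliser_trivial arc k by (auto simp: edge_fixer_def)
  then show False using k by (simp add: edge_fixer_def)
qed

text \<open>For s = 4 the edge fixers of vu are the elements of G mapping one 4-arc through vu to
  another that differs from it only in the last vertex.\<close>
lemma edge_fixers_map_arc:
  assumes "s = 4" "E v u"
  obtains \<alpha> \<alpha>' where "\<alpha> \<in> s_arcs V E s" "\<alpha>' \<in> s_arcs V E s"
    "\<And>k. edge_fixer v u k \<longleftrightarrow> k \<in> G \<and> map k \<alpha> = \<alpha>'"
proof -
  obtain a where a: "E v a" "a \<noteq> u" using other_neighbour[OF assms(2)] by blast
  obtain d where d: "E u d" "d \<noteq> v" using other_neighbour[OF adj_sym[OF assms(2)]] by blast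
  obtain f f' where N: "\<And>y. E d y \<longleftrightarrow> y = u \<or> y = f \<or> y = f'"
    and fd: "f \<noteq> f'" "f \<noteq> u" "f' \<noteq> u"
    using neighbourhood_split[OF adj_sym[OF d(1)]] by blast
  have adj: "E d f" "E d f'" using N by auto
  have arcs: "[a, v, u, d, f] \<in> s_arcs V E s" "[a, v, u, d, f'] \<in> s_arcs V E s"
    using s_arcs_4I[OF adj_sym[OF a(1)] assms(2) d(1) adj(1) a(2) d(2)[symmetric] fd(2)[symmetric]]
      s_arcs_4I[OF adj_sym[OF a(1)] assms(2) d(1) adj(2) a(2) d(2)[symmetric] fd(3)[symmetric]]
      assms(1) by simp_all
  show thesis
  proof (rule that[OF arcs], intro iffI)
    fix k assume k: "edge_fixer v u k"
    have fixed: "k a = a" "k v = v" "k u = u" "k d = d"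
      using k a(1) assms(2) adj_sym d(1) by (auto simp: edge_fixer_def)
    have "k f \<noteq> f"
      using edge_fixer_moves[OF assms(1) adj_sym[OF assms(2)] edge_fixer_sym[OF k] d adj(1) fd(2)] .
    then have "k f = f'"
      using aut_fixing_arc_cases[OF G_graph_aut fixed(4,3) N fd] k by (auto simp: edge_fixer_def)
    then show "k \<in> G \<and> map k [a, v, u, d, f] = [a, v, u, d, f']"
      using fixed k by (simp add: edge_fixer_def)
  next
    fix k assume k: "k \<in> G \<and> map k [a, v, u, d, f] = [a, v, u, d, f']"
    then have fixed: "k a = a" "k v = v" "k u = u" "k d = d" "k f = f'" by simp_all
    have "f \<in> V" using adj adj_in_V by blast
    have "k \<noteq> one_G"
    proof
      assume "k = one_G"
      then have "k f = f" using BijGroup_one_apply[OF \<open>f \<in> V\<close>] by simp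
      then show False using fixed(5) fd(1) by simp
    qed
    moreover have "k y = y" if "E v y" for y
      using aut_fixing_two_neighbours[OF G_graph_aut fixed(2,3,1) assms(2) a(1) a(2)[symmetric]
          that]
        k by blast
    moreover have "k y = y" if "E u y" for y
      using aut_fixing_two_neighbours[OF G_graph_aut fixed(3,2,4) adj_sym[OF assms(2)] d(1)
          d(2)[symmetric] that] k by blast
    ultimately show "edge_fixer v u k" using k by (simp add: edge_fixer_def)
  qed
qed

lemma edge_fixer_exists:
  assumes "s = 4" "E v u"
  shows "\<exists>k. edge_fixer v u k"
proof -
  obtain \<alpha> \<alpha>' where "\<alpha> \<in> s_arcs V E s" "\<alpha>' \<in> s_arcs V E s"
    and fixers: "\<And>k. edge_fixer v u k \<longleftrightarrow> k \<in> G \<and> map k \<alpha> = \<alpha>'"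
    using edge_fixers_map_arc[OF assms] by blast
  then obtain k where "k \<in> G" "map k \<alpha> = \<alpha>'" using s_regular_exists by blast
  then show ?thesis using fixers by blast
qed

lemma edge_fixer_unique:
  assumes "s = 4" "E v u" "edge_fixer v u k" "edge_fixer v u k'"
  shows "k = k'"
proof -
  obtain \<alpha> \<alpha>' where "\<alpha> \<in> s_arcs V E s" "\<alpha>' \<in> s_arcs V E s"
    and fixers: "\<And>k. edge_fixer v u k \<longleftrightarrow> k \<in> G \<and> map k \<alpha> = \<alpha>'"
    using edge_fixers_map_arc[OF assms(1,2)] by blast
  then show ?thesis using s_regular_unique fixers assms(3,4) by blast
qed

lemma edge_fixer_swaps:
  assumes "s = 4" "E v u" "edge_fixer v u k" "E v w" "w \<noteq> u"
    and N: "\<And>y. E w y \<longleftrightarrow> y = v \<or> y = b \<or> y = b'" and "b \<noteq> b'" "b \<noteq> v" "b' \<noteq> v"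
  shows "k b = b' \<and> k b' = b"
proof -
  have fixed: "k w = w" "k v = v" "k \<in> G"
    using assms(2-4) adj_sym by (auto simp: edge_fixer_def)
  have "E w b" using N by blast
  then have "k b \<noteq> b" using edge_fixer_moves[OF assms(1-5)] assms(8) by blast
  then show ?thesis using aut_fixing_arc_cases[OF G_graph_aut[OF fixed(3)] fixed(1,2) N assms(7-9)]
    by blast
qed

lemma edge_fixer_mult:
  assumes s: "s = 4" and N: "\<And>y. E v y \<longleftrightarrow> y = u \<or> y = a \<or> y = a'" "a \<noteq> a'" "a \<noteq> u" "a' \<noteq> u"
    and k: "edge_fixer v u k" and k2: "edge_fixer v a k2"
  shows "edge_fixer v a' (k \<cdot> k2)"
proof -
  have vu: "E v u" and va: "E v a" "E v a'" using N by auto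
  have kG: "k \<in> G" and k2G: "k2 \<in> G" using k k2 by (auto simp: edge_fixer_def)
  have kk2_apply: "(k \<cdot> k2) y = k (k2 y)" if "y \<in> V" for y using G_mult_apply[OF kG k2G that] .
  have fix_v: "(k \<cdot> k2) y = y" if "E v y" for y
    using that kk2_apply[of y] adj_in_V k2 k by (auto simp: edge_fixer_def)
  obtain e e' where Na': "\<And>y. E a' y \<longleftrightarrow> y = v \<or> y = e \<or> y = e'"
    and de: "e \<noteq> e'" "e \<noteq> v" "e' \<noteq> v"
    using neighbourhood_split[OF adj_sym[OF va(2)]] by blast
  have "k2 e = e' \<and> k2 e' = e" using edge_fixer_swaps[OF s va(1) k2 va(2) N(2)[symmetric] Na' de] .
  moreover have "k e = e' \<and> k e' = e" using edge_fixer_swaps[OF s vu k va(2) N(4) Na' de] .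
  moreover have "k2 v = v" "k v = v" using k2 k va(1) vu adj_sym by (auto simp: edge_fixer_def)
  moreover have "e \<in> V" "e' \<in> V" "v \<in> V" using Na' adj_in_V by auto
  ultimately have fix_a': "(k \<cdot> k2) y = y" if "E a' y" for y using Na'[of y] that kk2_apply by auto
  obtain b where b: "E u b" "b \<noteq> v" using other_neighbour[OF adj_sym[OF vu]] by blast
  have "k2 b \<noteq> b" using edge_fixer_moves[OF s va(1) k2 vu N(3)[symmetric] b] .
  moreover have "k (k2 b) = k2 b"
    using G_adj[OF k2G b(1)] k2 k vu by (simp add: edge_fixer_def)
  ultimately have "(k \<cdot> k2) b \<noteq> b" using kk2_apply adj_in_V[OF b(1)] by simp
  then have "k \<cdot> k2 \<noteq> one_G" using BijGroup_one_apply adj_in_V[OF b(1)] by metis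
  then show ?thesis using G_mult[OF kG k2G] fix_v fix_a' by (simp add: edge_fixer_def)
qed

lemma edge_fixer_conj:
  assumes "s = 4" "E v u" "E v' u'" and h: "h \<in> G" "h v = v'" "h u = u'"
    and k: "edge_fixer v u k" and k': "edge_fixer v' u' k'"
  shows "k' \<cdot> h = h \<cdot> k"
proof -
  have kG: "k \<in> G" and k'G: "k' \<in> G" using k k' by (auto simp: edge_fixer_def)
  define k'' where "k'' = h \<cdot> (k \<cdot> inv_G h)"
  have k''G: "k'' \<in> G" unfolding k''_def using G_mult G_inv h(1) kG by blast
  have k''_apply: "k'' x = h (k (inv_G h x))" if "x \<in> V" for x
    unfolding k''_def using G_mult_apply[OF h(1) G_mult[OF kG G_inv[OF h(1)]] that]
      G_mult_apply[OF kG G_inv[OF h(1)] that] by simp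
  have k''_fix: "k'' y = y" if "w \<in> V" "\<forall>z. E w z \<longrightarrow> k z = z" "E (h w) y" for w y
  proof -
    have yV: "y \<in> V" using adj_in_V that(3) by blast
    define z where "z = inv_G h y"
    have zV: "z \<in> V" unfolding z_def using G_mem[OF G_inv[OF h(1)] yV] .
    have hz: "h z = y" unfolding z_def using G_apply_inv[OF h(1) yV] .
    have "E w z" using that(3) hz G_adj_iff[OF h(1) that(1) zV] by simp
    then show ?thesis using that(2) k''_apply[OF yV] hz z_def by simp
  qed
  have "k'' \<noteq> one_G"
  proof
    assume k''1: "k'' = one_G"
    have "k x = one_G x" if x: "x \<in> V" for x
    proof -
      have hx: "h x \<in> V" using G_mem[OF h(1) x] .
      have "h (k x) = h x"
        using k''_apply[OF hx] G_inv_apply[OF h(1) x] k''1 BijGroup_one_apply[OF hx] by simp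
      then show ?thesis using G_inj[OF h(1) G_mem[OF kG x] x] BijGroup_one_apply[OF x] by simp
    qed
    then have "k = one_G" using G_eqI[OF kG G_one] by blast
    then show False using k by (simp add: edge_fixer_def)
  qed
  moreover have "\<forall>y. E v' y \<longrightarrow> k'' y = y" "\<forall>y. E u' y \<longrightarrow> k'' y = y"
    using k''_fix adj_in_V[OF assms(2)] k h(2,3) by (auto simp: edge_fixer_def)
  ultimately have "edge_fixer v' u' k''" using k''G by (simp add: edge_fixer_def)
  then have k''_eq: "k'' = k'" using edge_fixer_unique[OF assms(1,3) _ k'] by blast
  show ?thesis
  proof (rule G_eqI[OF G_mult[OF k'G h(1)] G_mult[OF h(1) kG]])
    fix x assume x: "x \<in> V"
    have "(k' \<cdot> h) x = k'' (h x)" using G_mult_apply[OF k'G h(1) x] k''_eq by simp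
    also have "\<dots> = h (k x)" using k''_apply[OF G_mem[OF h(1) x]] G_inv_apply[OF h(1) x] by simp
    also have "\<dots> = (h \<cdot> k) x" using G_mult_apply[OF h(1) kG x] by simp
    finally show "(k' \<cdot> h) x = (h \<cdot> k) x" .
  qed
qed

end

section \<open>Double covers\<close>

text \<open>c is the non-trivial covering transformation; the fibres are the pairs {x, c x}.\<close>
locale double_cover =
  fixes V :: "'a set" and E :: "'a \<Rightarrow> 'a \<Rightarrow> bool"
    and Vt :: "'b set" and Et :: "'b \<Rightarrow> 'b \<Rightarrow> bool" and p :: "'b \<Rightarrow> 'a" and c :: "'b \<Rightarrow> 'b"
  assumes cover_simple: "simple_graph Vt Et"
    and covering: "covering_projection Vt Et V E p"
    and c_mem: "x \<in> Vt \<Longrightarrow> c x \<in> Vt"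
    and c_proj: "x \<in> Vt \<Longrightarrow> p (c x) = p x"
    and c_no_fixpoint: "x \<in> Vt \<Longrightarrow> c x \<noteq> x"
    and fibre_cases: "x \<in> Vt \<Longrightarrow> y \<in> Vt \<Longrightarrow> p y = p x \<Longrightarrow> y = x \<or> y = c x"
    and c_adj: "Et x y \<Longrightarrow> Et (c x) (c y)"
begin

lemma cover_adj_in_Vt: "Et x y \<Longrightarrow> x \<in> Vt \<and> y \<in> Vt"
  using cover_simple by (simp add: simple_graph_def)

lemma proj_mem: "x \<in> Vt \<Longrightarrow> p x \<in> V"
  using covering by (auto simp: covering_projection_def)

lemma proj_surj: "v \<in> V \<Longrightarrow> \<exists>x\<in>Vt. p x = v"
  using covering by (auto simp: covering_projection_def)

lemma proj_adj: "Et x y \<Longrightarrow> E (p x) (p y)"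
  using covering by (simp add: covering_projection_def)

lemma proj_inj_on_neighbours:
  assumes "Et x y" "Et x y'" "p y = p y'"
  shows "y = y'"
proof -
  have "inj_on p {y. Et x y}"
    using covering cover_adj_in_Vt[OF assms(1)] by (simp add: covering_projection_def bij_betw_def)
  then show ?thesis using assms by (auto dest: inj_onD)
qed

lemma lift_neighbour:
  assumes "x \<in> Vt" "E (p x) w"
  shows "\<exists>y. Et x y \<and> p y = w"
proof -
  have "p ` {y. Et x y} = {v. E (p x) v}"
    using covering assms(1) by (simp add: covering_projection_def bij_betw_def)
  then show ?thesis using assms(2) by (metis (mono_tags, lifting) imageE mem_Collect_eq)
qed

lemma c_involutive:
  assumes "x \<in> Vt" shows "c (c x) = x"
proof -
  have "p (c (c x)) = p x" using c_proj c_mem assms by simp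
  then have "c (c x) = x \<or> c (c x) = c x"
    using fibre_cases[OF assms c_mem[OF c_mem[OF assms]]] by blast
  then show ?thesis using c_no_fixpoint[OF c_mem[OF assms]] by blast
qed

lemma canonical_double_cover_if_colouring:
  assumes c_swaps: "\<And>x. x \<in> Vt \<Longrightarrow> col (c x) = (\<not> col x)"
    and proper: "\<And>x y. Et x y \<Longrightarrow> col y = (\<not> col x)"
  shows "is_canonical_double_cover V E Vt Et p"
proof -
  define \<phi> where "\<phi> x = (p x, col x)" for x
  have "inj_on \<phi> Vt"
  proof (rule inj_onI)
    fix x y assume x: "x \<in> Vt" and y: "y \<in> Vt" and "\<phi> x = \<phi> y"
    then have "p y = p x" "col y = col x" by (simp_all add: \<phi>_def)
    then show "x = y" using fibre_cases[OF x y] c_swaps[OF x] by auto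
  qed
  moreover have "\<phi> ` Vt = V \<times> (UNIV :: bool set)"
  proof
    show "\<phi> ` Vt \<subseteq> V \<times> UNIV" using proj_mem by (auto simp: \<phi>_def)
  next
    show "V \<times> UNIV \<subseteq> \<phi> ` Vt"
    proof clarify
      fix v b assume "v \<in> V"
      then obtain x where x: "x \<in> Vt" "p x = v" using proj_surj by blast
      then have "\<phi> x = (v, b) \<or> \<phi> (c x) = (v, b)"
        using c_proj[OF x(1)] c_swaps[OF x(1)] by (cases "col x = b") (simp_all add: \<phi>_def)
      then show "(v, b) \<in> \<phi> ` Vt"
        using image_eqI[of "(v, b)" \<phi> x Vt] image_eqI[of "(v, b)" \<phi> "c x" Vt] x(1) c_mem by metis
    qed
  qed
  moreover have "\<forall>x\<in>Vt. \<forall>y\<in>Vt. Et x y \<longleftrightarrow> cdc_edge E (\<phi> x) (\<phi> y)"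
  proof (intro ballI iffI)
    fix x y assume "Et x y"
    then show "cdc_edge E (\<phi> x) (\<phi> y)"
      using proj_adj[OF \<open>Et x y\<close>] proper[OF \<open>Et x y\<close>] by (simp add: cdc_edge_def \<phi>_def)
  next
    fix x y assume x: "x \<in> Vt" and y: "y \<in> Vt" and "cdc_edge E (\<phi> x) (\<phi> y)"
    then have adj: "E (p x) (p y)" and col: "col y = (\<not> col x)"
      by (simp_all add: cdc_edge_def \<phi>_def)
    obtain y' where y': "Et x y'" "p y' = p y" using lift_neighbour[OF x adj] by blast
    then have "y' = y \<or> y' = c y" using fibre_cases[OF y _ y'(2)] cover_adj_in_Vt[OF y'(1)] by blast
    moreover have "col y' = col y" using proper[OF y'(1)] col by simp
    ultimately show "Et x y" using y'(1) c_swaps[OF y] by auto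
  qed
  moreover have "\<forall>x\<in>Vt. fst (\<phi> x) = p x" by (simp add: \<phi>_def)
  ultimately show ?thesis unfolding is_canonical_double_cover_def bij_betw_def by blast
qed
end

lemma two_cover_imp_double_cover:
  assumes simple: "simple_graph Vt Et" and two: "two_cover Vt Et V E p"
  shows "\<exists>c. double_cover V E Vt Et p c"
proof -
  let ?CT = "covering_transformations Vt Et p" and ?one = "\<one>\<^bsub>BijGroup Vt\<^esub>"
  have cov: "covering_projection Vt Et V E p"
    and unique: "\<And>x y. x \<in> Vt \<Longrightarrow> y \<in> Vt \<Longrightarrow> p x = p y \<Longrightarrow> \<exists>!c. c \<in> ?CT \<and> c x = y"
    and "card ?CT = 2"
    using two unfolding two_cover_def regular_covering_def by blast+
  have one_apply: "?one x = x" if "x \<in> Vt" for x using that by (rule BijGroup_one_apply)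
  have "?one \<in> Bij Vt" unfolding BijGroup_def using id_Bij by simp
  then have one_CT: "?one \<in> ?CT"
    unfolding covering_transformations_def graph_aut_def using one_apply by simp
  obtain a b where ab: "?CT = {a, b}" "a \<noteq> b" using \<open>card ?CT = 2\<close> by (auto simp: card_2_iff)
  then obtain c where c: "c \<in> ?CT" "c \<noteq> ?one" by blast
  have CT: "?CT = {?one, c}" using ab one_CT c by auto
  have c_Bij: "c \<in> Bij Vt" and c_adj_iff: "\<forall>x\<in>Vt. \<forall>y\<in>Vt. Et x y \<longleftrightarrow> Et (c x) (c y)"
    and c_proj: "\<forall>x\<in>Vt. p (c x) = p x"
    using c(1) unfolding covering_transformations_def graph_aut_def by blast+
  have "double_cover V E Vt Et p c"
  proof
    show "simple_graph Vt Et" "covering_projection Vt Et V E p" by (fact simple, fact cov)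
    show "c x \<in> Vt" if "x \<in> Vt" for x using Bij_mem[OF c_Bij that] .
    show "p (c x) = p x" if "x \<in> Vt" for x using c_proj that by blast
    show "c x \<noteq> x" if x: "x \<in> Vt" for x
    proof
      assume "c x = x"
      then have "c = ?one" using unique[OF x x refl] c(1) one_CT one_apply[OF x] by blast
      then show False using c(2) by simp
    qed
    show "y = x \<or> y = c x" if x: "x \<in> Vt" and y: "y \<in> Vt" and "p y = p x" for x y
    proof -
      obtain c' where "c' \<in> ?CT" "c' x = y" using unique[OF x y] \<open>p y = p x\<close> by metis
      then show ?thesis using CT one_apply[OF x] by auto
    qed
    show "Et (c x) (c y)" if "Et x y" for x y
      using c_adj_iff simple that unfolding simple_graph_def by blast
  qed
  then show ?thesis by blast
qed

section \<open>Lifting G to a split double cover\<close>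

lemma complement_contains_lift:
  assumes H: "subgroup H (BijGroup Vt)" "H \<subseteq> lifted_group Vt Et p G"
    and complement: "H <#>\<^bsub>BijGroup Vt\<^esub> covering_transformations Vt Et p = lifted_group Vt Et p G"
    and g: "g \<in> G" "is_lift Vt Et p g gt"
  shows "\<exists>h\<in>H. is_lift Vt Et p g h"
proof -
  have "gt \<in> H <#>\<^bsub>BijGroup Vt\<^esub> covering_transformations Vt Et p"
    using g complement unfolding lifted_group_def by blast
  then obtain h k where hk: "h \<in> H" "k \<in> covering_transformations Vt Et p"
    "gt = h \<otimes>\<^bsub>BijGroup Vt\<^esub> k"
    unfolding set_mult_def by blast
  have hB: "h \<in> Bij Vt" using subgroup.subset[OF H(1)] hk(1) by (auto simp: BijGroup_carrier)
  have kB: "k \<in> Bij Vt" and kp: "\<And>x. x \<in> Vt \<Longrightarrow> p (k x) = p x"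
    using hk(2) unfolding covering_transformations_def graph_aut_def by auto
  have "p (h y) = g (p y)" if y: "y \<in> Vt" for y
  proof -
    obtain z where z: "z \<in> Vt" "k z = y" using Bij_surj[OF kB y] by blast
    have "gt z = h y" using hk(3) BijGroup_mult_apply[OF hB kB z(1)] z(2) by simp
    moreover have "p (gt z) = g (p z)" using g(2) z(1) by (simp add: is_lift_def)
    ultimately show ?thesis using kp[OF z(1)] z(2) by simp
  qed
  moreover have "h \<in> graph_aut Vt Et" using H(2) hk(1) by (auto simp: lifted_group_def is_lift_def)
  ultimately show ?thesis using hk(1) unfolding is_lift_def by blast
qed

locale split_double_cover = cubic_s_regular V E G s + double_cover V E Vt Et p c
  for V :: "'a set" and E G s and Vt :: "'b set" and Et p c +
  fixes H :: "('b \<Rightarrow> 'b) set"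
  assumes cover_connected: "graph_connected Vt Et"
    and H_subgroup: "subgroup H (BijGroup Vt)"
    and H_lifted: "H \<subseteq> lifted_group Vt Et p G"
    and H_inter_CT: "H \<inter> covering_transformations Vt Et p = {\<one>\<^bsub>BijGroup Vt\<^esub>}"
    and lift_exists: "\<And>g. g \<in> G \<Longrightarrow> \<exists>h\<in>H. is_lift Vt Et p g h"
begin

lemma H_Bij: "h \<in> H \<Longrightarrow> h \<in> Bij Vt"
  using subgroup.subset[OF H_subgroup] by (auto simp: BijGroup_carrier)

lemma H_graph_aut: "h \<in> H \<Longrightarrow> h \<in> graph_aut Vt Et"
  using H_lifted by (auto simp: lifted_group_def is_lift_def)

lemma H_mem: "h \<in> H \<Longrightarrow> x \<in> Vt \<Longrightarrow> h x \<in> Vt"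
  by (rule Bij_mem[OF H_Bij])

lemma H_inj: "h \<in> H \<Longrightarrow> x \<in> Vt \<Longrightarrow> y \<in> Vt \<Longrightarrow> h x = h y \<Longrightarrow> x = y"
  by (rule Bij_inj[OF H_Bij])

lemma H_adj: "h \<in> H \<Longrightarrow> Et x y \<Longrightarrow> Et (h x) (h y)"
  using H_graph_aut cover_adj_in_Vt unfolding graph_aut_def by blast

lemma H_mult: "g \<in> H \<Longrightarrow> f \<in> H \<Longrightarrow> g \<otimes>\<^bsub>BijGroup Vt\<^esub> f \<in> H"
  by (rule subgroup.m_closed[OF H_subgroup])

lemma H_inv: "h \<in> H \<Longrightarrow> inv\<^bsub>BijGroup Vt\<^esub> h \<in> H"
  by (rule subgroup.m_inv_closed[OF H_subgroup])

lemma H_one: "\<one>\<^bsub>BijGroup Vt\<^esub> \<in> H"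
  by (rule subgroup.one_closed[OF H_subgroup])

lemma H_mult_apply:
  "g \<in> H \<Longrightarrow> f \<in> H \<Longrightarrow> x \<in> Vt \<Longrightarrow> (g \<otimes>\<^bsub>BijGroup Vt\<^esub> f) x = g (f x)"
  by (rule BijGroup_mult_apply[OF H_Bij H_Bij])

definition lift :: "('a \<Rightarrow> 'a) \<Rightarrow> 'b \<Rightarrow> 'b" where
  "lift g = (SOME h. h \<in> H \<and> is_lift Vt Et p g h)"

lemma lift_in_H: "g \<in> G \<Longrightarrow> lift g \<in> H"
  and lift_proj: "g \<in> G \<Longrightarrow> x \<in> Vt \<Longrightarrow> p (lift g x) = g (p x)"
proof -
  assume "g \<in> G"
  then have "lift g \<in> H \<and> is_lift Vt Et p g (lift g)"
    unfolding lift_def using someI_ex lift_exists by (metis (no_types, lifting))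
  then show "lift g \<in> H" "x \<in> Vt \<Longrightarrow> p (lift g x) = g (p x)" by (auto simp: is_lift_def)
qed

lemma lift_mem: "g \<in> G \<Longrightarrow> x \<in> Vt \<Longrightarrow> lift g x \<in> Vt"
  using lift_in_H H_mem by blast

text \<open>Two lifts in H of the same g differ by a covering transformation in H, hence agree.\<close>
lemma lift_unique:
  assumes g: "g \<in> G" and h: "h \<in> H" and h_proj: "\<And>x. x \<in> Vt \<Longrightarrow> p (h x) = g (p x)"
  shows "h = lift g"
proof -
  let ?l = "lift g"
  define k where "k = inv\<^bsub>BijGroup Vt\<^esub> ?l \<otimes>\<^bsub>BijGroup Vt\<^esub> h"
  have lH: "?l \<in> H" using lift_in_H[OF g] .
  have kH: "k \<in> H" unfolding k_def using H_mult H_inv lH h by blast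
  have lk: "?l (k x) = h x" if "x \<in> Vt" for x
    unfolding k_def using H_mult_apply[OF H_inv[OF lH] h that] BijGroup_apply_inv[OF H_Bij[OF lH]]
      H_mem[OF h that] by simp
  have "p (k x) = p x" if x: "x \<in> Vt" for x
  proof -
    have "g (p (k x)) = g (p x)" using lift_proj[OF g H_mem[OF kH x]] lk[OF x] h_proj[OF x] by simp
    then show ?thesis using G_inj[OF g] proj_mem H_mem[OF kH x] x by blast
  qed
  then have "k \<in> covering_transformations Vt Et p"
    using H_graph_aut[OF kH] by (simp add: covering_transformations_def)
  then have "k = \<one>\<^bsub>BijGroup Vt\<^esub>" using H_inter_CT kH by blast
  then have "h x = ?l x" if "x \<in> Vt" for x using lk[OF that] that by (simp add: BijGroup_one_apply)
  then show ?thesis using Bij_eqI[OF H_Bij[OF h] H_Bij[OF lH]] by blast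
qed

lemma lift_mult:
  assumes "g \<in> G" "f \<in> G" "x \<in> Vt"
  shows "lift (g \<cdot> f) x = lift g (lift f x)"
proof -
  have "lift g \<otimes>\<^bsub>BijGroup Vt\<^esub> lift f = lift (g \<cdot> f)"
  proof (rule lift_unique)
    show "g \<cdot> f \<in> G" using G_mult assms by blast
    show "lift g \<otimes>\<^bsub>BijGroup Vt\<^esub> lift f \<in> H" using H_mult lift_in_H assms by blast
    fix y assume y: "y \<in> Vt"
    have "p ((lift g \<otimes>\<^bsub>BijGroup Vt\<^esub> lift f) y) = p (lift g (lift f y))"
      using H_mult_apply[OF lift_in_H lift_in_H y] assms by simp
    also have "\<dots> = g (f (p y))" using lift_proj lift_mem assms y by simp
    also have "\<dots> = (g \<cdot> f) (p y)" using G_mult_apply assms proj_mem y by simp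
    finally show "p ((lift g \<otimes>\<^bsub>BijGroup Vt\<^esub> lift f) y) = (g \<cdot> f) (p y)" .
  qed
  then show ?thesis using H_mult_apply[OF lift_in_H lift_in_H assms(3)] assms(1,2) by metis
qed

lemma lift_one:
  assumes "x \<in> Vt" shows "lift one_G x = x"
proof -
  have "\<one>\<^bsub>BijGroup Vt\<^esub> = lift one_G"
    by (rule lift_unique) (auto simp: G_one H_one BijGroup_one_apply proj_mem)
  then show ?thesis using BijGroup_one_apply[OF assms] by metis
qed

lemma lift_inv_lift: "g \<in> G \<Longrightarrow> y \<in> Vt \<Longrightarrow> lift (inv_G g) (lift g y) = y"
  using lift_mult[OF G_inv] G_l_inv lift_one by metis

lemma lift_lift_inv: "g \<in> G \<Longrightarrow> y \<in> Vt \<Longrightarrow> lift g (lift (inv_G g) y) = y"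
  using lift_mult[OF _ G_inv] G_r_inv lift_one by metis

lemma lift_commutes_c:
  assumes g: "g \<in> G" and x: "x \<in> Vt"
  shows "lift g (c x) = c (lift g x)"
proof -
  have "p (lift g (c x)) = p (lift g x)" using lift_proj g x c_mem c_proj by metis
  then have "lift g (c x) = lift g x \<or> lift g (c x) = c (lift g x)"
    using fibre_cases lift_mem g x c_mem by metis
  moreover have "lift g (c x) \<noteq> lift g x"
    using H_inj lift_in_H[OF g] c_mem x c_no_fixpoint by metis
  ultimately show ?thesis by blast
qed

lemma lift_fibre_cases:
  "g \<in> G \<Longrightarrow> x \<in> Vt \<Longrightarrow> g (p x) = p x \<Longrightarrow> lift g x = x \<or> lift g x = c x"
  using fibre_cases lift_proj lift_mem by metis

text \<open>On the stabiliser of p x, whether the lift moves x is a homomorphism to Z_2.\<close>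
lemma lift_fixes_mult_iff:
  assumes g: "g \<in> G" and f: "f \<in> G" and x: "x \<in> Vt" and "g (p x) = p x" "f (p x) = p x"
  shows "lift (g \<cdot> f) x = x \<longleftrightarrow> (lift g x = x \<longleftrightarrow> lift f x = x)"
proof -
  have gf: "lift (g \<cdot> f) x = lift g (lift f x)" using lift_mult g f x by blast
  have "lift g x = x \<or> lift g x = c x" "lift f x = x \<or> lift f x = c x"
    using lift_fibre_cases assms by auto
  then show ?thesis
    using gf lift_commutes_c[OF g x] c_involutive[OF x] c_no_fixpoint[OF x] by auto
qed

lemma lift_fixes_cube_iff:
  assumes g: "g \<in> G" and x: "x \<in> Vt" and gx: "g (p x) = p x"
  shows "lift (g \<cdot> (g \<cdot> g)) x = x \<longleftrightarrow> lift g x = x"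
proof -
  have "(g \<cdot> g) (p x) = p x" using G_mult_apply[OF g g proj_mem[OF x]] gx by simp
  then show ?thesis
    using lift_fixes_mult_iff[OF g G_mult[OF g g] x gx] lift_fixes_mult_iff[OF g g x gx gx] by blast
qed

lemma lift_fixes_c_iff:
  assumes "g \<in> G" "x \<in> Vt" "g (p x) = p x"
  shows "lift g (c x) = c x \<longleftrightarrow> lift g x = x"
  using lift_fibre_cases[OF assms] lift_commutes_c[OF assms(1,2)] c_involutive[OF assms(2)]
    c_no_fixpoint[OF assms(2)] c_no_fixpoint[OF c_mem[OF assms(2)]] by auto

lemma lift_fixes_adj_iff:
  assumes g: "g \<in> G" and adj: "Et x y" and "g (p x) = p x" "g (p y) = p y"
  shows "lift g x = x \<longleftrightarrow> lift g y = y"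
proof -
  have x: "x \<in> Vt" and y: "y \<in> Vt" using adj cover_adj_in_Vt by auto
  have adj': "Et (lift g x) (lift g y)" using H_adj[OF lift_in_H[OF g] adj] .
  have not_c: "\<not> Et x (c y)" using proj_inj_on_neighbours[OF adj _ c_proj[OF y, symmetric]]
    c_no_fixpoint[OF y] by auto
  have "lift g x = x \<or> lift g x = c x" "lift g y = y \<or> lift g y = c y"
    using lift_fibre_cases assms x y by auto
  then show ?thesis
    using adj' not_c c_adj c_involutive[OF x] c_no_fixpoint[OF x] c_no_fixpoint[OF y] by metis
qed

lemma lift_fixes_conj_iff:
  assumes g: "g \<in> G" and k: "k \<in> G" and k': "k' \<in> G" and x: "x \<in> Vt"
    and "k (p x) = p x" and conj: "k' \<cdot> g = g \<cdot> k"
  shows "lift k' (lift g x) = lift g x \<longleftrightarrow> lift k x = x"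
proof -
  have "lift k' (lift g x) = lift g (lift k x)" using lift_mult g k k' x conj by metis
  moreover have "lift k x = x \<or> lift k x = c x" using lift_fibre_cases k x assms(5) by blast
  moreover have "lift g (c x) \<noteq> lift g x"
    using lift_commutes_c g x c_no_fixpoint lift_mem by metis
  ultimately show ?thesis by auto
qed

lemma one_regular_stabiliser_lift_fixes:
  assumes "s = 1" and x: "x \<in> Vt" and g: "g \<in> G" "g (p x) = p x"
  shows "lift g x = x"
proof -
  have "g \<cdot> (g \<cdot> g) = one_G" using one_regular_stabiliser_cube[OF assms(1) proj_mem[OF x] g] .
  then show ?thesis using lift_fixes_cube_iff[OF g(1) x g(2)] lift_one[OF x] by simp
qed

lemma edge_fixer_lift_fixes_iff:
  assumes "s = 4" and x: "x \<in> Vt" and x': "x' \<in> Vt" and adj: "E (p x) u" and adj': "E (p x') u'"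
    and k: "edge_fixer (p x) u k" and k': "edge_fixer (p x') u' k'"
  shows "lift k x = x \<longleftrightarrow> lift k' x' = x'"
proof -
  obtain h where h: "h \<in> G" "h (p x) = p x'" "h u = u'" using arc_transitive[OF adj adj'] by blast
  have kG: "k \<in> G" and k'G: "k' \<in> G" using k k' by (auto simp: edge_fixer_def)
  have kx: "k (p x) = p x" using k adj_sym[OF adj] by (simp add: edge_fixer_def)
  have k'x': "k' (p x') = p x'" using k' adj_sym[OF adj'] by (simp add: edge_fixer_def)
  have iff: "lift k' (lift h x) = lift h x \<longleftrightarrow> lift k x = x"
    using lift_fixes_conj_iff[OF h(1) kG k'G x kx edge_fixer_conj[OF assms(1) adj adj' h k k']] .
  have "p (lift h x) = p x'" using lift_proj[OF h(1) x] h(2) by simp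
  then have "lift h x = x' \<or> lift h x = c x'" using fibre_cases[OF x' lift_mem[OF h(1) x]] by blast
  then show ?thesis using iff lift_fixes_c_iff[OF k'G x' k'x'] by auto
qed

text \<open>The edge fixers of the three edges at v have equal parity, and the product of two of
  them is the third; so their common parity vanishes.\<close>
lemma edge_fixer_lift_fixes:
  assumes s: "s = 4" and x: "x \<in> Vt" and adj: "E (p x) u" and k: "edge_fixer (p x) u k"
  shows "lift k x = x"
proof -
  obtain a a' where N: "\<And>y. E (p x) y \<longleftrightarrow> y = u \<or> y = a \<or> y = a'"
    and d: "a \<noteq> a'" "a \<noteq> u" "a' \<noteq> u"
    using neighbourhood_split[OF adj] by blast
  have adj_a: "E (p x) a" "E (p x) a'" using N by auto
  obtain k2 where k2: "edge_fixer (p x) a k2" using edge_fixer_exists[OF s adj_a(1)] by blast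
  have kG: "k \<in> G" and k2G: "k2 \<in> G" using k k2 by (auto simp: edge_fixer_def)
  have fixed: "k (p x) = p x" "k2 (p x) = p x"
    using k k2 adj adj_a adj_sym by (auto simp: edge_fixer_def)
  have "lift (k \<cdot> k2) x = x \<longleftrightarrow> (lift k x = x \<longleftrightarrow> lift k2 x = x)"
    using lift_fixes_mult_iff[OF kG k2G x fixed] .
  moreover have "lift (k \<cdot> k2) x = x \<longleftrightarrow> lift k x = x"
    using edge_fixer_lift_fixes_iff[OF s x x adj_a(2) adj edge_fixer_mult[OF s N d k k2] k] .
  moreover have "lift k2 x = x \<longleftrightarrow> lift k x = x"
    using edge_fixer_lift_fixes_iff[OF s x x adj_a(1) adj k2 k] .
  ultimately show ?thesis by blast
qed

lemma edge_kernel_lift_fixes: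
  assumes s: "s = 4" and x: "x \<in> Vt" and adj: "E (p x) w" and "m \<in> G"
    and "\<And>y. E (p x) y \<Longrightarrow> m y = y" "\<And>y. E w y \<Longrightarrow> m y = y"
  shows "lift m x = x"
proof (cases "m = one_G")
  case True
  then show ?thesis using lift_one x by simp
next
  case False
  then have "edge_fixer (p x) w m" using assms(4-6) by (simp add: edge_fixer_def)
  then show ?thesis using edge_fixer_lift_fixes[OF s x adj] by blast
qed

lemma nbhd_fixer_lift_fixes:
  assumes s: "s = 4" and x: "x \<in> Vt" and g: "g \<in> G" "g (p x) = p x"
    and g_fix: "\<And>y. E (p x) y \<Longrightarrow> g y = y"
  shows "lift g x = x"
proof -
  obtain w where adj: "E (p x) w" using neighbour_exists proj_mem x by blast
  obtain b b' where Nw: "\<And>y. E w y \<longleftrightarrow> y = p x \<or> y = b \<or> y = b'"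
    and db: "b \<noteq> b'" "b \<noteq> p x" "b' \<noteq> p x"
    using neighbourhood_split[OF adj_sym[OF adj]] by blast
  have g_w: "g w = w" using g_fix adj by blast
  consider "g b = b \<and> g b' = b'" | "g b = b' \<and> g b' = b"
    using aut_fixing_arc_cases[OF G_graph_aut[OF g(1)] g_w g(2) Nw db] by blast
  then show ?thesis
  proof cases
    case 1
    then have "g y = y" if "E w y" for y using Nw[of y] that g_w g(2) by auto
    then show ?thesis using edge_kernel_lift_fixes[OF s x adj g(1) g_fix] by blast
  next
    case 2
    obtain a where a: "E (p x) a" "a \<noteq> w" using other_neighbour[OF adj] by blast
    obtain k where k: "edge_fixer (p x) a k" using edge_fixer_exists[OF s a(1)] by blast
    have kG: "k \<in> G" and k_fix: "\<And>y. E (p x) y \<Longrightarrow> k y = y" "k (p x) = p x"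
      using k a(1) adj_sym by (auto simp: edge_fixer_def)
    have "k b = b' \<and> k b' = b" using edge_fixer_swaps[OF s a(1) k adj a(2)[symmetric] Nw db] .
    moreover have "b \<in> V" "b' \<in> V" "p x \<in> V" using Nw adj_in_V by auto
    ultimately have "(g \<cdot> k) y = y" if "E w y" for y
      using Nw[of y] that 2 G_mult_apply[OF g(1) kG] k_fix(2) g(2) by auto
    moreover have "(g \<cdot> k) y = y" if "E (p x) y" for y
      using that G_mult_apply[OF g(1) kG] adj_in_V g_fix k_fix(1) by auto
    ultimately have "lift (g \<cdot> k) x = x"
      using edge_kernel_lift_fixes[OF s x adj G_mult[OF g(1) kG]] by blast
    then show ?thesis
      using lift_fixes_mult_iff[OF g(1) kG x g(2) k_fix(2)] edge_fixer_lift_fixes[OF s x a(1) k]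
        by blast
  qed
qed

lemma arc_stabiliser_lift_fixes:
  assumes s: "s = 4" and x: "x \<in> Vt" and adj: "E (p x) w"
    and g: "g \<in> G" "g (p x) = p x" "g w = w"
  shows "lift g x = x"
proof -
  obtain a a' where N: "\<And>y. E (p x) y \<longleftrightarrow> y = w \<or> y = a \<or> y = a'"
    and d: "a \<noteq> a'" "a \<noteq> w" "a' \<noteq> w"
    using neighbourhood_split[OF adj] by blast
  consider "g a = a \<and> g a' = a'" | "g a = a' \<and> g a' = a"
    using aut_fixing_arc_cases[OF G_graph_aut[OF g(1)] g(2,3) N d] by blast
  then show ?thesis
  proof cases
    case 1
    then have "g y = y" if "E (p x) y" for y using N[of y] that g(3) by auto
    then show ?thesis using nbhd_fixer_lift_fixes[OF s x g(1,2)] by simp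
  next
    case 2
    obtain b where b: "E w b" "b \<noteq> p x" using other_neighbour[OF adj_sym[OF adj]] by blast
    obtain k where k: "edge_fixer w b k" using edge_fixer_exists[OF s b(1)] by blast
    have kG: "k \<in> G" and k_fix: "k (p x) = p x" "k w = w"
      using k adj_sym[OF adj] adj_sym[OF b(1)] by (auto simp: edge_fixer_def)
    have "k a = a' \<and> k a' = a"
      using edge_fixer_swaps[OF s b(1) k adj_sym[OF adj] b(2)[symmetric] N d] .
    moreover have "a \<in> V" "a' \<in> V" "w \<in> V" using N adj_in_V by auto
    ultimately have "(g \<cdot> k) y = y" if "E (p x) y" for y
      using N[of y] that 2 G_mult_apply[OF g(1) kG] k_fix g(3) by auto
    then have "lift (g \<cdot> k) x = x"
      using nbhd_fixer_lift_fixes[OF s x G_mult[OF g(1) kG]] G_mult_apply[OF g(1) kG] k_fix(1) g(2)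
        proj_mem[OF x] by simp
    moreover have "lift k x = x"
    proof -
      obtain y where y: "Et x y" "p y = w" using lift_neighbour[OF x adj] by blast
      have "lift k y = y"
        using edge_fixer_lift_fixes[OF s _ _ k[folded y(2)]] b(1) y cover_adj_in_Vt by simp
      then show ?thesis using lift_fixes_adj_iff[OF kG y(1)] k_fix y(2) by simp
    qed
    ultimately show ?thesis using lift_fixes_mult_iff[OF g(1) kG x g(2) k_fix(1)] by blast
  qed
qed

text \<open>A 3-cycle t on the neighbours of p x has its cube in an arc stabiliser, so lift t fixes
  x; composing g with t or t squared then reduces g to an arc stabiliser.\<close>
lemma four_regular_stabiliser_lift_fixes:
  assumes s: "s = 4" and x: "x \<in> Vt" and g: "g \<in> G" "g (p x) = p x"
  shows "lift g x = x"
proof -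
  obtain w where adj: "E (p x) w" using neighbour_exists proj_mem x by blast
  obtain a a' where N: "\<And>y. E (p x) y \<longleftrightarrow> y = w \<or> y = a \<or> y = a'"
    and d: "a \<noteq> a'" "a \<noteq> w" "a' \<noteq> w"
    using neighbourhood_split[OF adj] by blast
  obtain t where t: "t \<in> G" "t (p x) = p x" "t w = a" "t a = a'" "t a' = w"
    using stabiliser_three_cycle[OF _ N d] s by auto
  have V: "w \<in> V" "a \<in> V" "a' \<in> V" "p x \<in> V" using N adj_in_V adj by auto
  have "(t \<cdot> (t \<cdot> t)) w = w" "(t \<cdot> (t \<cdot> t)) (p x) = p x"
    using G_mult_apply[OF t(1) G_mult[OF t(1) t(1)]] G_mult_apply[OF t(1) t(1)] V t by simp_all
  then have "lift (t \<cdot> (t \<cdot> t)) x = x"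
    using arc_stabiliser_lift_fixes[OF s x adj G_mult[OF t(1) G_mult[OF t(1) t(1)]]] by simp
  then have lift_t: "lift t x = x" using lift_fixes_cube_iff[OF t(1) x t(2)] by simp
  have to_a': "lift h x = x" if h: "h \<in> G" "h (p x) = p x" "h w = a'" for h
  proof -
    have "(t \<cdot> h) w = w" "(t \<cdot> h) (p x) = p x" using G_mult_apply[OF t(1) h(1)] V h t by simp_all
    then have "lift (t \<cdot> h) x = x"
      using arc_stabiliser_lift_fixes[OF s x adj G_mult[OF t(1) h(1)]] by simp
    then show ?thesis using lift_fixes_mult_iff[OF t(1) h(1) x t(2) h(2)] lift_t by simp
  qed
  have "g w = w \<or> g w = a \<or> g w = a'" using G_adj[OF g(1) adj] g(2) N by simp
  then show ?thesis
  proof (elim disjE)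
    assume "g w = w"
    then show ?thesis using arc_stabiliser_lift_fixes[OF s x adj g] by simp
  next
    assume "g w = a"
    then have "(t \<cdot> g) w = a'" "(t \<cdot> g) (p x) = p x"
      using G_mult_apply[OF t(1) g(1)] V g t by simp_all
    then have "lift (t \<cdot> g) x = x" using to_a'[OF G_mult[OF t(1) g(1)]] by simp
    then show ?thesis using lift_fixes_mult_iff[OF t(1) g(1) x t(2) g(2)] lift_t by simp
  next
    assume "g w = a'"
    then show ?thesis using to_a'[OF g] by simp
  qed
qed

lemma stabiliser_lift_fixes:
  assumes "s \<in> {1, 4}" "x \<in> Vt" "g \<in> G" "g (p x) = p x"
  shows "lift g x = x"
  using assms one_regular_stabiliser_lift_fixes four_regular_stabiliser_lift_fixes by auto

end

section \<open>The lift orbit as a colour class\<close>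

locale stabiliser_lifting_cover = split_double_cover +
  assumes stabiliser_lifts: "x \<in> Vt \<Longrightarrow> g \<in> G \<Longrightarrow> g (p x) = p x \<Longrightarrow> lift g x = x"
begin

definition lift_orbit :: "'b \<Rightarrow> 'b set" where
  "lift_orbit x0 = (\<lambda>g. lift g x0) ` G"

lemma self_in_lift_orbit: "x0 \<in> Vt \<Longrightarrow> x0 \<in> lift_orbit x0"
  using lift_one G_one unfolding lift_orbit_def by (metis image_eqI)

lemma lift_orbit_closed:
  assumes x0: "x0 \<in> Vt" and "y \<in> lift_orbit x0" "g \<in> G"
  shows "lift g y \<in> lift_orbit x0"
proof -
  obtain f where f: "f \<in> G" "y = lift f x0" using assms(2) unfolding lift_orbit_def by blast
  then have "lift g y = lift (g \<cdot> f) x0" using lift_mult[OF assms(3) f(1) x0] by simp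
  then show ?thesis using G_mult[OF assms(3) f(1)] unfolding lift_orbit_def by blast
qed

lemma lift_orbit_meets_fibre:
  assumes x0: "x0 \<in> Vt" and y: "y \<in> Vt"
  shows "y \<in> lift_orbit x0 \<or> c y \<in> lift_orbit x0"
proof -
  obtain h where h: "h \<in> G" "h (p x0) = p y" using vertex_transitive proj_mem x0 y by blast
  then have "p (lift h x0) = p y" using lift_proj[OF h(1) x0] by simp
  then have "lift h x0 = y \<or> lift h x0 = c y" using fibre_cases[OF y lift_mem[OF h(1) x0]] by blast
  moreover have "lift h x0 \<in> lift_orbit x0" using h(1) unfolding lift_orbit_def by blast
  ultimately show ?thesis by auto
qed

text \<open>Otherwise an element of the stabiliser of p x0 would lift to a map sending x0 to c x0.\<close>
lemma c_notin_lift_orbit: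
  assumes x0: "x0 \<in> Vt" and y: "y \<in> lift_orbit x0"
  shows "c y \<notin> lift_orbit x0"
proof
  assume "c y \<in> lift_orbit x0"
  then obtain g' where g': "g' \<in> G" "c y = lift g' x0" unfolding lift_orbit_def by blast
  obtain g where g: "g \<in> G" "y = lift g x0" using y unfolding lift_orbit_def by blast
  define m where "m = inv_G g \<cdot> g'"
  have mG: "m \<in> G" unfolding m_def using G_mult G_inv g g' by blast
  have "lift m x0 = lift (inv_G g) (c (lift g x0))"
    unfolding m_def using lift_mult[OF G_inv[OF g(1)] g'(1) x0] g g' by simp
  also have "\<dots> = c x0"
    using lift_commutes_c[OF G_inv[OF g(1)] lift_mem[OF g(1) x0]] lift_inv_lift[OF g(1) x0] by simp
  finally have "lift m x0 = c x0" .
  moreover have "m (p x0) = p x0" using lift_proj[OF mG x0] \<open>lift m x0 = c x0\<close> c_proj[OF x0] by simp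
  ultimately show False using stabiliser_lifts[OF x0 mG] c_no_fixpoint[OF x0] by simp
qed

text \<open>An edge from x0 into the orbit is moved, by arc-transitivity at p x0, onto every edge at x0;
  so the orbit is closed under adjacency and, the cover being connected, contains c x0.\<close>
lemma lift_orbit_no_neighbour:
  assumes x0: "x0 \<in> Vt" and adj: "Et x0 y"
  shows "y \<notin> lift_orbit x0"
proof
  assume y: "y \<in> lift_orbit x0"
  have all_neighbours: "y' \<in> lift_orbit x0" if y': "Et x0 y'" for y'
  proof -
    obtain g where g: "g \<in> G" "g (p x0) = p x0" "g (p y) = p y'"
      using arc_transitive[OF proj_adj[OF adj] proj_adj[OF y']] by blast
    have "Et x0 (lift g y)"
      using H_adj[OF lift_in_H[OF g(1)] adj] stabiliser_lifts[OF x0 g(1,2)] by simp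
    moreover have "p (lift g y) = p y'"
      using lift_proj[OF g(1)] cover_adj_in_Vt[OF adj] g(3) by simp
    ultimately have "lift g y = y'" using proj_inj_on_neighbours y' by blast
    then show ?thesis using lift_orbit_closed[OF x0 y g(1)] by simp
  qed
  have closed_adj: "z' \<in> lift_orbit x0" if z: "z \<in> lift_orbit x0" "Et z z'" for z z'
  proof -
    obtain g where g: "g \<in> G" "z = lift g x0" using z(1) unfolding lift_orbit_def by blast
    have z'V: "z' \<in> Vt" using cover_adj_in_Vt[OF z(2)] by blast
    have "Et (lift (inv_G g) z) (lift (inv_G g) z')"
      using H_adj[OF lift_in_H[OF G_inv[OF g(1)]] z(2)] .
    then have "Et x0 (lift (inv_G g) z')" using lift_inv_lift[OF g(1) x0] g(2) by simp
    then have "lift g (lift (inv_G g) z') \<in> lift_orbit x0"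
      using all_neighbours lift_orbit_closed[OF x0] g(1) by blast
    then show ?thesis using lift_lift_inv[OF g(1) z'V] by simp
  qed
  have "z \<in> lift_orbit x0" if "Et\<^sup>*\<^sup>* x0 z" for z
    using that
    by (induction rule: rtranclp_induct) (use self_in_lift_orbit[OF x0] closed_adj in auto)
  moreover have "Et\<^sup>*\<^sup>* x0 (c x0)"
    using cover_connected c_mem[OF x0] x0 by (auto simp: graph_connected_def)
  ultimately show False using c_notin_lift_orbit[OF x0 self_in_lift_orbit[OF x0]] by blast
qed

lemma lift_orbit_independent:
  assumes x0: "x0 \<in> Vt" and "Et y z" "y \<in> lift_orbit x0"
  shows "z \<notin> lift_orbit x0"
proof
  assume z: "z \<in> lift_orbit x0"
  obtain g where g: "g \<in> G" "y = lift g x0" using assms(3) unfolding lift_orbit_def by blast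
  have "Et (lift (inv_G g) y) (lift (inv_G g) z)"
    using H_adj[OF lift_in_H[OF G_inv[OF g(1)]] assms(2)] .
  then have "Et x0 (lift (inv_G g) z)" using lift_inv_lift[OF g(1) x0] g(2) by simp
  then show False
    using lift_orbit_no_neighbour[OF x0] lift_orbit_closed[OF x0 z G_inv[OF g(1)]] by blast
qed

text \<open>The lift orbit of any vertex and its image under c are the two colour classes.\<close>
theorem canonical_double_cover: "is_canonical_double_cover V E Vt Et p"
proof -
  obtain x0 where x0: "x0 \<in> Vt" using cover_connected by (auto simp: graph_connected_def)
  let ?O = "lift_orbit x0"
  have swap: "c y \<in> ?O \<longleftrightarrow> y \<notin> ?O" if "y \<in> Vt" for y
    using lift_orbit_meets_fibre[OF x0 that] c_notin_lift_orbit[OF x0] by blast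
  have "z \<in> ?O \<longleftrightarrow> y \<notin> ?O" if "Et y z" for y z
    using lift_orbit_independent[OF x0 that] lift_orbit_independent[OF x0 c_adj[OF that]]
      swap cover_adj_in_Vt[OF that] by blast
  then show ?thesis using canonical_double_cover_if_colouring[of "\<lambda>y. y \<in> ?O"] swap by blast
qed

end

theorem theorem4p1:
  fixes V :: "'a set" and E :: "'a \<Rightarrow> 'a \<Rightarrow> bool" and G :: "('a \<Rightarrow> 'a) set"
    and s :: nat
    and Vt :: "'b set" and Et :: "'b \<Rightarrow> 'b \<Rightarrow> bool" and p :: "'b \<Rightarrow> 'a"
  assumes "simple_graph V E" and "graph_connected V E" and "cubic V E"
    and "subgroup G (BijGroup V)" and "G \<subseteq> graph_aut V E"
    and "s \<in> {1, 4}" and "s_regular V E G s"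
    and "simple_graph Vt Et" and "graph_connected Vt Et"
    and "G_split_two_cover V E G Vt Et p"
  shows "is_canonical_double_cover V E Vt Et p"
proof -
  obtain H where H: "subgroup H (BijGroup Vt)" "H \<subseteq> lifted_group Vt Et p G"
    "H \<inter> covering_transformations Vt Et p = {\<one>\<^bsub>BijGroup Vt\<^esub>}"
    "H <#>\<^bsub>BijGroup Vt\<^esub> covering_transformations Vt Et p = lifted_group Vt Et p G"
    using assms(10) unfolding G_split_two_cover_def by blast
  have lifts: "\<exists>h\<in>H. is_lift Vt Et p g h" if "g \<in> G" for g
    using assms(10) complement_contains_lift[OF H(1,2,4) that] that
    unfolding G_split_two_cover_def by blast
  obtain c where c: "double_cover V E Vt Et p c"
    using two_cover_imp_double_cover assms(8,10) unfolding G_split_two_cover_def by blast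
  have "1 \<le> s" using assms(6) by auto
  then have "cubic_s_regular V E G s"
    using cubic_graph.intro[OF assms(1,3)] cubic_s_regular_axioms.intro[OF assms(4,5) _ assms(7)]
    by (simp add: cubic_s_regular_def)
  then interpret split_double_cover V E G s Vt Et p c H
    using c H(1-3) lifts assms(9)
    by (intro split_double_cover.intro split_double_cover_axioms.intro)
  interpret stabiliser_lifting_cover V E G s Vt Et p c H
    using stabiliser_lift_fixes[OF assms(6)] by unfold_locales
  show ?thesis by (rule canonical_double_cover)
qed

end
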